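(* Let $n$ be a positive integer, $m=1$, $A\in\mathbb{C}^{n\times n}$, $B\in\mathbb{C}^{n\times 1}$ nonzero, $(A,B)$ reachable and all eigenvalues of $A$ of modulus $<1$. Let $\mathbf{R}\in\mathbb{C}^{n\times n}$ be Hermitian, $\mathbf{R}\geq0$ and singular, with $\mathbf{R}-A\mathbf{R}A^*=BH+H^*B^*$ for some $H\in\mathbb{C}^{1\times n}$. Then $B^*\Pi_{\mathcal{N}(\mathbf{R})}B$ is invertible (i.e. nonzero).
   Context: $\mathcal{N}(\mathbf{R})$ is the null space of $\mathbf{R}$ and $\Pi_{\mathcal{N}(\mathbf{R})}$ the orthogonal projection onto it. $(A,B)$ reachable means $\operatorname{rank}[B,AB,\dots,A^{n-1}B]=n$. *)

theory Defs
  imports "HOL-Analysis.Analysis"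
begin

text \<open>Complex n x n matrices are complex^'n^'n; column vectors (n x 1) and
  row vectors (1 x n) are both represented as complex^'n.\<close>

definition cadj :: "complex^'n^'m \<Rightarrow> complex^'m^'n" where
  "cadj M = (\<chi> i j. cnj (M $ j $ i))"

definition cinner :: "complex^'n \<Rightarrow> complex^'n \<Rightarrow> complex" where
  "cinner x y = (\<Sum>i\<in>UNIV. cnj (x $ i) * y $ i)"

primrec mpow :: "complex^'n^'n \<Rightarrow> nat \<Rightarrow> complex^'n^'n" where
  "mpow A 0 = mat 1"
| "mpow A (Suc k) = A ** mpow A k"

definition hermitian :: "complex^'n^'n \<Rightarrow> bool" where
  "hermitian R \<longleftrightarrow> cadj R = R"

definition psd :: "complex^'n^'n \<Rightarrow> bool" where
  "psd R \<longleftrightarrow> hermitian R \<and> (\<forall>x. 0 \<le> Re (cinner x (R *v x)))"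

definition eigenvalue_of :: "complex^'n^'n \<Rightarrow> complex \<Rightarrow> bool" where
  "eigenvalue_of A c \<longleftrightarrow> (\<exists>v. v \<noteq> 0 \<and> A *v v = c *s v)"

text \<open>Reachability: rank [B, AB, ..., A^(n-1) B] = n, with the rank written as the
  dimension of the span of the columns.\<close>
definition reachable :: "complex^'n^'n \<Rightarrow> complex^'n \<Rightarrow> bool" where
  "reachable A B \<longleftrightarrow>
     vec.dim (vec.span {mpow A k *v B | k. k < CARD('n)}) = CARD('n)"

definition null_space :: "complex^'n^'m \<Rightarrow> (complex^'n) set" where
  "null_space R = {x. R *v x = 0}"

definition is_orth_proj :: "complex^'n^'n \<Rightarrow> (complex^'n) set \<Rightarrow> bool" where
  "is_orth_proj P S \<longleftrightarrow> P ** P = P \<and> cadj P = P \<and> range (\<lambda>x. P *v x) = S"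

definition orth_proj :: "(complex^'n) set \<Rightarrow> complex^'n^'n" where
  "orth_proj S = (THE P. is_orth_proj P S)"

definition outer :: "complex^'n \<Rightarrow> complex^'m \<Rightarrow> complex^'m^'n" where
  "outer b h = (\<chi> i j. b $ i * h $ j)"

end

theory Submission
  imports Defs
begin

text \<open>
  If \<open>B\<^sup>* \<Pi> B = 0\<close> for the orthogonal projection \<open>\<Pi>\<close> onto \<open>\<N>(R)\<close>, then \<open>B\<close> is orthogonal
  to \<open>\<N>(R)\<close>. For \<open>x \<in> \<N>(R)\<close> the Lyapunov identity then gives
  \<open>-(A\<^sup>* x)\<^sup>* R (A\<^sup>* x) = x\<^sup>* (B H + H\<^sup>* B\<^sup>*) x = 0\<close>, so positive semidefiniteness puts
  \<open>A\<^sup>* x\<close> into \<open>\<N>(R)\<close>. Thus \<open>\<N>(R)\<close> is an \<open>A\<^sup>*\<close>-invariant subspace orthogonal to \<open>B\<close>,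
  hence orthogonal to every \<open>A\<^sup>k B\<close>; by reachability these vectors span the whole space,
  so \<open>\<N>(R) = 0\<close>, contradicting the singularity of \<open>R\<close>.
\<close>

lemma cinner_add_right: "cinner x (y + z) = cinner x y + cinner x z"
  by (simp add: cinner_def distrib_left sum.distrib)

lemma cinner_diff_right: "cinner x (y - z) = cinner x y - cinner x z"
  by (simp add: cinner_def right_diff_distrib sum_subtractf)

lemma cinner_diff_left: "cinner (x - y) z = cinner x z - cinner y z"
  by (simp add: cinner_def left_diff_distrib sum_subtractf)

lemma cinner_scale_right: "cinner x (c *s y) = c * cinner x y"
  by (simp add: cinner_def sum_distrib_left mult_ac)

lemma cinner_scale_left: "cinner (c *s x) y = cnj c * cinner x y"
  by (simp add: cinner_def sum_distrib_left mult_ac)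

lemma cinner_minus_right: "cinner x (- y) = - cinner x y"
  by (simp add: cinner_def sum_negf)

lemma cinner_zero_right [simp]: "cinner x 0 = 0"
  by (simp add: cinner_def)

lemma cnj_cinner: "cnj (cinner x y) = cinner y x"
  by (simp add: cinner_def mult.commute)

lemma cinner_eq_0_sym: "cinner x y = 0 \<longleftrightarrow> cinner y x = 0"
  by (metis cnj_cinner complex_cnj_zero_iff)

lemma Re_cinner_self: "Re (cinner x x) = (\<Sum>i\<in>UNIV. (cmod (x $ i))\<^sup>2)"
  by (simp add: cinner_def Re_sum mult.commute[of "cnj _"] complex_mult_cnj cmod_power2)

lemma Re_cinner_self_eq_0 [simp]: "Re (cinner x x) = 0 \<longleftrightarrow> x = 0"
  by (simp add: Re_cinner_self sum_nonneg_eq_0_iff vec_eq_iff)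

lemma cinner_self_eq_0 [simp]: "cinner x x = 0 \<longleftrightarrow> x = 0"
proof
  show "cinner x x = 0 \<Longrightarrow> x = 0"
    using Re_cinner_self_eq_0[of x] by simp
qed (simp add: cinner_def)

lemma cinner_matrix_vector_left: "cinner (M *v x) y = cinner x (cadj M *v y)"
  by (simp add: cinner_def cadj_def matrix_vector_mult_def sum_distrib_left sum_distrib_right
      mult_ac) (rule sum.swap)

lemma cinner_matrix_vector_right: "cinner x (M *v y) = cinner (cadj M *v x) y"
  by (simp add: cinner_def cadj_def matrix_vector_mult_def sum_distrib_left sum_distrib_right
      mult_ac) (rule sum.swap)

lemma cinner_right_eqI:
  assumes "\<And>u. cinner u v = cinner u w"
  shows "v = w"
proof -
  have "cinner (v - w) (v - w) = 0"
    using assms by (simp add: cinner_diff_right)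
  then show ?thesis by simp
qed

lemma inner_vec_complex: "x \<bullet> y = Re (cinner x y)"
  by (simp add: inner_vec_def cinner_def inner_complex_def Re_sum)

lemma cadj_matrix_mul: "cadj (M ** N) = cadj N ** cadj M"
  by (simp add: cadj_def matrix_matrix_mult_def vec_eq_iff mult.commute)

lemma vector_scaleR_conv_of_real: "r *\<^sub>R (x :: complex^'n) = complex_of_real r *s x"
  unfolding vec_eq_iff vector_scaleR_component by (simp add: scaleR_conv_of_real)

lemma vec_subspace_imp_subspace:
  fixes S :: "(complex^'n) set"
  assumes "vec.subspace S"
  shows "subspace S"
  using assms by (simp add: vec.subspace_def subspace_def vector_scaleR_conv_of_real)

lemma vec_subspace_null_space: "vec.subspace (null_space R)"
  unfolding null_space_def by (rule vec.subspace_kernel)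

lemma orthogonal_decomposition_exists:
  assumes "vec.subspace S"
  shows "\<exists>y\<in>S. \<forall>s\<in>S. cinner s (x - y) = 0"
proof -
  have span_S: "span S = S"
    using vec_subspace_imp_subspace[OF assms] by simp
  obtain y z where y: "y \<in> S" and z: "\<And>w. w \<in> S \<Longrightarrow> orthogonal z w" and "x = y + z"
    using orthogonal_subspace_decomp_exists[of S x] unfolding span_S by metis
  have "cinner s (x - y) = 0" if s: "s \<in> S" for s
  proof -
    \<comment> \<open>Real orthogonality to both \<open>s\<close> and \<open>\<i> s\<close> kills the real and the imaginary part.\<close>
    have "Re (cinner z s) = 0" "Re (cinner z (\<i> *s s)) = 0"
      using z[OF s] z[OF vec.subspace_scale[OF assms s]]
      by (simp_all add: orthogonal_def inner_vec_complex)
    then have "cinner z s = 0"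
      by (simp add: cinner_scale_right complex_eq_iff)
    then show ?thesis
      using \<open>x = y + z\<close> by (simp add: cinner_eq_0_sym[of z])
  qed
  with y show ?thesis by blast
qed

lemma orthogonal_decomposition_unique:
  assumes "vec.subspace S"
    and "y \<in> S" "\<forall>s\<in>S. cinner s (x - y) = 0"
    and "y' \<in> S" "\<forall>s\<in>S. cinner s (x - y') = 0"
  shows "y = y'"
proof -
  have "y - y' \<in> S"
    using assms by (simp add: vec.subspace_diff)
  then have "cinner (y - y') (y - y') = cinner (y - y') (x - y') - cinner (y - y') (x - y)"
    by (simp add: cinner_diff_right)
  also have "\<dots> = 0"
    using assms \<open>y - y' \<in> S\<close> by simp
  finally show ?thesis by simp
qed

lemma is_orth_proj_fixes:
  assumes "is_orth_proj P S" "s \<in> S"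
  shows "P *v s = s"
proof -
  obtain y where "s = P *v y"
    using assms by (auto simp: is_orth_proj_def)
  then show ?thesis
    using assms by (simp add: is_orth_proj_def matrix_vector_mul_assoc)
qed

lemma is_orth_proj_unique:
  assumes P: "is_orth_proj P S" and Q: "is_orth_proj Q S"
  shows "P = Q"
proof -
  have absorb: "P' ** Q' = Q'" if "is_orth_proj P' S" "is_orth_proj Q' S" for P' Q'
  proof -
    have "P' *v (Q' *v x) = Q' *v x" for x
      using that by (intro is_orth_proj_fixes) (auto simp: is_orth_proj_def)
    then show ?thesis
      by (simp add: matrix_eq matrix_vector_mul_assoc[symmetric])
  qed
  have "P = cadj (Q ** P)"
    using absorb[OF Q P] P by (simp add: is_orth_proj_def)
  also have "\<dots> = P ** Q"
    using P Q by (simp add: cadj_matrix_mul is_orth_proj_def)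
  also have "\<dots> = Q"
    using absorb[OF P Q] .
  finally show ?thesis .
qed

definition orth_proj_vec :: "(complex^'n) set \<Rightarrow> complex^'n \<Rightarrow> complex^'n" where
  "orth_proj_vec S x = (THE y. y \<in> S \<and> (\<forall>s\<in>S. cinner s (x - y) = 0))"

context
  fixes S :: "(complex^'n) set"
  assumes subspace_S: "vec.subspace S"
begin

lemma orth_proj_vec:
  "orth_proj_vec S x \<in> S" "\<And>s. s \<in> S \<Longrightarrow> cinner s (x - orth_proj_vec S x) = 0"
proof -
  have "\<exists>!y. y \<in> S \<and> (\<forall>s\<in>S. cinner s (x - y) = 0)"
    using orthogonal_decomposition_exists[OF subspace_S, of x]
      orthogonal_decomposition_unique[OF subspace_S, where x = x] by blast
  from theI'[OF this] show "orth_proj_vec S x \<in> S"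
    and "\<And>s. s \<in> S \<Longrightarrow> cinner s (x - orth_proj_vec S x) = 0"
    unfolding orth_proj_vec_def by simp_all
qed

lemma orth_proj_vec_eqI:
  assumes "y \<in> S" "\<And>s. s \<in> S \<Longrightarrow> cinner s (x - y) = 0"
  shows "orth_proj_vec S x = y"
  by (rule orthogonal_decomposition_unique[OF subspace_S, where x = x])
    (simp_all add: orth_proj_vec assms)

lemma orth_proj_vec_fixes: "s \<in> S \<Longrightarrow> orth_proj_vec S s = s"
  by (rule orth_proj_vec_eqI) simp_all

lemma linear_orth_proj_vec: "Vector_Spaces.linear (*s) (*s) (orth_proj_vec S)"
proof -
  have "orth_proj_vec S (x + y) = orth_proj_vec S x + orth_proj_vec S y" for x y
  proof (rule orth_proj_vec_eqI)
    show "orth_proj_vec S x + orth_proj_vec S y \<in> S"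
      by (simp add: orth_proj_vec vec.subspace_add[OF subspace_S])
    have split: "x + y - (orth_proj_vec S x + orth_proj_vec S y)
        = (x - orth_proj_vec S x) + (y - orth_proj_vec S y)"
      by simp
    show "cinner s (x + y - (orth_proj_vec S x + orth_proj_vec S y)) = 0" if "s \<in> S" for s
      using that unfolding split cinner_add_right by (simp add: orth_proj_vec)
  qed
  moreover have "orth_proj_vec S (c *s x) = c *s orth_proj_vec S x" for c x
  proof (rule orth_proj_vec_eqI)
    show "c *s orth_proj_vec S x \<in> S"
      by (simp add: orth_proj_vec vec.subspace_scale[OF subspace_S])
    have factor: "c *s x - c *s orth_proj_vec S x = c *s (x - orth_proj_vec S x)"
      by (simp add: vec.scale_right_diff_distrib)
    show "cinner s (c *s x - c *s orth_proj_vec S x) = 0" if "s \<in> S" for s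
      using that unfolding factor cinner_scale_right by (simp add: orth_proj_vec)
  qed
  ultimately show ?thesis
    by (simp add: Vector_Spaces.linear_iff vec.vector_space_axioms)
qed

lemma cinner_orth_proj_vec_commute:
  "cinner u (orth_proj_vec S v) = cinner (orth_proj_vec S u) v"
proof -
  have "cinner (u - orth_proj_vec S u) (orth_proj_vec S v) = 0"
    using orth_proj_vec cinner_eq_0_sym by blast
  then have "cinner u (orth_proj_vec S v) = cinner (orth_proj_vec S u) (orth_proj_vec S v)"
    by (simp add: cinner_diff_left)
  also have "\<dots> = cinner (orth_proj_vec S u) v"
    using orth_proj_vec(2)[of "orth_proj_vec S u" v] orth_proj_vec(1)
    by (simp add: cinner_diff_right)
  finally show ?thesis .
qed

lemma is_orth_proj_matrix_orth_proj_vec: "is_orth_proj (matrix (orth_proj_vec S)) S"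
proof -
  define P where "P = matrix (orth_proj_vec S)"
  have P_apply: "P *v x = orth_proj_vec S x" for x
    unfolding P_def by (rule matrix_works[OF linear_orth_proj_vec])
  have "P ** P = P"
    unfolding matrix_eq matrix_vector_mul_assoc[symmetric] P_apply
    by (simp add: orth_proj_vec orth_proj_vec_fixes)
  moreover have "cadj P = P"
  proof -
    have "cadj P *v v = P *v v" for v
      by (rule cinner_right_eqI)
        (simp add: cinner_matrix_vector_left[symmetric] P_apply cinner_orth_proj_vec_commute)
    then show ?thesis by (simp add: matrix_eq)
  qed
  moreover have "range ((*v) P) = S"
  proof
    show "range ((*v) P) \<subseteq> S"
      by (auto simp: P_apply orth_proj_vec)
    show "S \<subseteq> range ((*v) P)"
      by (metis P_apply orth_proj_vec_fixes rangeI subsetI)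
  qed
  ultimately show ?thesis
    by (simp add: is_orth_proj_def P_def)
qed

lemma orth_proj_is_orth_proj: "is_orth_proj (orth_proj S) S"
  unfolding orth_proj_def
  by (metis theI is_orth_proj_matrix_orth_proj_vec is_orth_proj_unique)

end

lemma is_orth_proj_form_eq_0_imp_orthogonal:
  assumes P: "is_orth_proj P S" and "cinner b (P *v b) = 0" and "s \<in> S"
  shows "cinner s b = 0"
proof -
  have P_idem: "P ** P = P" and P_adj: "cadj P = P"
    using P by (simp_all add: is_orth_proj_def)
  have "cinner (P *v b) (P *v b) = cinner b (P *v b)"
    by (simp add: cinner_matrix_vector_left P_adj matrix_vector_mul_assoc P_idem)
  then have Pb: "P *v b = 0"
    using assms(2) by simp
  have "cinner s b = cinner (P *v s) b"
    using is_orth_proj_fixes[OF P \<open>s \<in> S\<close>] by simp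
  also have "\<dots> = cinner s (P *v b)"
    by (simp add: cinner_matrix_vector_left P_adj)
  finally show ?thesis
    using Pb by simp
qed

lemma nonneg_quadratic_imp_linear_coeff_eq_0:
  fixes b c :: real
  assumes "\<And>t. 0 \<le> c * t\<^sup>2 + b * t"
  shows "b = 0"
proof (rule ccontr)
  assume "b \<noteq> 0"
  define d where "d = \<bar>c\<bar> + 1"
  have "d > 0" "c < d"
    by (simp_all add: d_def)
  have "c * (- b / d)\<^sup>2 + b * (- b / d) = b\<^sup>2 * (c - d) / d\<^sup>2"
    using \<open>d > 0\<close> by (simp add: field_simps power2_eq_square)
  also have "\<dots> < 0"
    using \<open>b \<noteq> 0\<close> \<open>d > 0\<close> \<open>c < d\<close> by (intro divide_neg_pos mult_pos_neg) auto
  finally show False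
    using assms[of "- b / d"] by simp
qed

lemma psd_cinner_eq_0_imp_kernel:
  assumes "psd R" and "cinner x (R *v x) = 0"
  shows "R *v x = 0"
proof -
  have R_adj: "cadj R = R" and nonneg: "\<And>y. 0 \<le> Re (cinner y (R *v y))"
    using assms(1) by (auto simp: psd_def hermitian_def)
  define w where "w = R *v x"
  have "cinner x (R *v w) = cinner w w"
    by (simp add: cinner_matrix_vector_right R_adj w_def)
  \<comment> \<open>The form at \<open>x - t R x\<close> is a real quadratic in \<open>t\<close> with linear coefficient \<open>-2 |R x|\<^sup>2\<close>.\<close>
  then have "Re (cinner (x - complex_of_real t *s w) (R *v (x - complex_of_real t *s w)))
      = Re (cinner w (R *v w)) * t\<^sup>2 + (- 2 * Re (cinner w w)) * t" for t
    using assms(2)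
    by (simp add: w_def matrix_vector_mult_diff_distrib vector_scalar_commute cinner_diff_left
        cinner_diff_right cinner_scale_left cinner_scale_right algebra_simps power2_eq_square)
  then have "- 2 * Re (cinner w w) = 0"
    using nonneg
    by (intro nonneg_quadratic_imp_linear_coeff_eq_0[of "Re (cinner w (R *v w))"]) metis
  then show ?thesis
    by (simp add: w_def)
qed

lemma outer_mult_vec: "outer b h *v x = (\<Sum>j\<in>UNIV. h $ j * x $ j) *s b"
  by (simp add: outer_def matrix_vector_mult_def vec_eq_iff sum_distrib_left mult_ac)

lemma cinner_outer_plus_cadj_eq_0:
  assumes "cinner x b = 0"
  shows "cinner x ((outer b h + cadj (outer b h)) *v x) = 0"
proof -
  have "cinner b x = 0"
    using assms cinner_eq_0_sym by blast
  then show ?thesis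
    using assms
    by (simp add: matrix_vector_mult_add_rdistrib cinner_add_right
        cinner_matrix_vector_right[of x "cadj _"] cinner_matrix_vector_left[symmetric]
        outer_mult_vec cinner_scale_left cinner_scale_right)
qed

lemma null_space_cadj_invariant:
  assumes "psd R"
    and "R - A ** R ** cadj A = outer B H + cadj (outer B H)"
    and "\<forall>s\<in>null_space R. cinner s B = 0"
    and "x \<in> null_space R"
  shows "cadj A *v x \<in> null_space R"
proof -
  define y where "y = cadj A *v x"
  have "R *v x = 0"
    using assms(4) by (simp add: null_space_def)
  then have "(R - A ** R ** cadj A) *v x = - (A *v (R *v y))"
    by (simp add: matrix_vector_mult_diff_rdistrib matrix_vector_mul_assoc[symmetric] y_def)
  then have "cinner x ((R - A ** R ** cadj A) *v x) = - cinner y (R *v y)"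
    by (simp add: cinner_minus_right cinner_matrix_vector_right y_def)
  moreover have "cinner x ((R - A ** R ** cadj A) *v x) = 0"
    unfolding assms(2) using assms(3,4) by (intro cinner_outer_plus_cadj_eq_0) blast
  ultimately have "cinner y (R *v y) = 0"
    by simp
  then show ?thesis
    using psd_cinner_eq_0_imp_kernel[OF assms(1)] by (simp add: null_space_def y_def)
qed

lemma orthogonal_mpow_if_cadj_invariant:
  assumes "\<forall>x\<in>N. cadj A *v x \<in> N" and "\<forall>x\<in>N. cinner x B = 0" and "x \<in> N"
  shows "cinner x (mpow A k *v B) = 0"
  using assms(3)
proof (induction k arbitrary: x)
  case 0
  then show ?case
    using assms(2) by simp
next
  case (Suc k)
  have "cinner x (mpow A (Suc k) *v B) = cinner (cadj A *v x) (mpow A k *v B)"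
    by (simp add: matrix_vector_mul_assoc[symmetric] cinner_matrix_vector_right)
  also have "\<dots> = 0"
    using Suc assms(1) by blast
  finally show ?case .
qed

lemma reachable_orthogonal_eq_0:
  assumes "reachable A B" and "\<And>k. k < CARD('n) \<Longrightarrow> cinner x (mpow A k *v B) = 0"
  shows "x = (0 :: complex^'n)"
proof -
  define K where "K = {mpow A k *v B | k. k < CARD('n)}"
  have "vec.span K = UNIV"
    using assms(1) vec.dim_eq_full[of K]
    by (simp add: reachable_def K_def vec.dimension_def card_cart_basis)
  moreover have "vec.subspace {v. cinner x v = 0}"
    by (simp add: vec.subspace_def cinner_add_right cinner_scale_right)
  then have "vec.span K \<subseteq> {v. cinner x v = 0}"
    using assms(2) by (intro vec.span_minimal) (auto simp: K_def)
  ultimately have "cinner x x = 0"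
    by blast
  then show ?thesis
    by simp
qed

lemma det_eq_0_imp_null_space_nonzero:
  fixes R :: "complex^'n^'n"
  assumes "det R = 0"
  obtains x where "x \<noteq> 0" and "x \<in> null_space R"
  using assms matrix_left_invertible_ker[of R] invertible_det_nz[of R]
  by (auto simp: null_space_def invertible_left_inverse)

theorem proposition4:
  fixes A R :: "complex^'n^'n" and B :: "complex^'n"
  assumes "B \<noteq> 0"
    and "reachable A B"
    and "\<forall>c. eigenvalue_of A c \<longrightarrow> cmod c < 1"
    and "hermitian R" and "psd R" and "det R = 0"
    and "\<exists>H :: complex^'n.
           R - A ** R ** cadj A = outer B H + cadj (outer B H)"
  shows "cinner B (orth_proj (null_space R) *v B) \<noteq> 0"
proof
  assume "cinner B (orth_proj (null_space R) *v B) = 0"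
  then have orthogonal: "\<forall>s\<in>null_space R. cinner s B = 0"
    using is_orth_proj_form_eq_0_imp_orthogonal orth_proj_is_orth_proj[OF vec_subspace_null_space]
    by blast
  obtain H where "R - A ** R ** cadj A = outer B H + cadj (outer B H)"
    using assms(7) by blast
  then have invariant: "\<forall>x\<in>null_space R. cadj A *v x \<in> null_space R"
    using null_space_cadj_invariant[OF assms(5)] orthogonal by blast
  obtain x where "x \<noteq> 0" and "x \<in> null_space R"
    using det_eq_0_imp_null_space_nonzero[OF assms(6)] .
  then have "cinner x (mpow A k *v B) = 0" for k
    using orthogonal_mpow_if_cadj_invariant[OF invariant orthogonal] by blast
  then have "x = 0"
    using reachable_orthogonal_eq_0[OF assms(2)] by blast
  with \<open>x \<noteq> 0\<close> show False ..
qed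

end
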